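(* Let $l\subset[0,1]$ be a compact set that is super sparse near every $a\in l$. Then the modified Assouad dimension of $l$ is $0$. The converse fails in general (e.g. $\{0\}\cup\{2^{-k}:k\ge1\}$ has modified Assouad dimension $0$ but is not sparse near $0$).
   Context: For a compact set $l\subset\mathbb{R}$ let $W(l)=\{k\in\mathbb{N}: l\cap([2^{-k-1},2^{-k}]\cup[-2^{-k},-2^{-k-1}])\neq\emptyset\}$, and for $a\in l$ let $W(l,a)=W(l-a)$; $l$ is super sparse near $a$ if $W(l,a)$ has upper Banach density $\limsup_{N\to\infty}\sup_{k\in\mathbb{N}}\#(W(l,a)\cap[k+1,k+N])/N=0$, and sparse near $a$ if its upper natural density is $0$. The Assouad dimension $\dim_{\mathrm A}F$ is the infimum of $s\ge0$ such that there is $C>0$ with $N(B(x,R)\cap F,r)\le C(R/r)^s$ for all $0<r<R$ and $x\in F$ ($N(E,r)$ = minimal number of $r$-intervals covering $E$). The modified Assouad dimension is $\inf\{\sup_i\dim_{\mathrm A}F_i: F\subset\bigcup_{i\in\mathbb{N}}F_i\}$. *)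

theory Defs
  imports "HOL-Analysis.Analysis" "HOL-Library.Liminf_Limsup"
begin

definition W :: "real set \<Rightarrow> nat set" where
  "W l = {k. l \<inter> ({(1/2)^(k+1) .. (1/2)^k} \<union> {-((1/2)^k) .. -((1/2)^(k+1))}) \<noteq> {}}"

definition W_at :: "real set \<Rightarrow> real \<Rightarrow> nat set" where
  "W_at l a = W ((\<lambda>x. x - a) ` l)"

text \<open>Upper Banach density is zero.\<close>
definition super_sparse_near :: "real set \<Rightarrow> real \<Rightarrow> bool" where
  "super_sparse_near l a \<longleftrightarrow>
     limsup (\<lambda>N::nat. SUP k::nat. ereal (real (card (W_at l a \<inter> {k+1..k+N})) / real N)) = 0"

text \<open>Upper natural density is zero.\<close>
definition sparse_near :: "real set \<Rightarrow> real \<Rightarrow> bool" where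
  "sparse_near l a \<longleftrightarrow>
     limsup (\<lambda>N::nat. ereal (real (card (W_at l a \<inter> {1..N})) / real N)) = 0"

definition cover_num :: "real set \<Rightarrow> real \<Rightarrow> nat" where
  "cover_num E r = (LEAST n. \<exists>C. finite C \<and> card C = n \<and> E \<subseteq> (\<Union>c\<in>C. {c..c+r}))"

definition assouad_dim :: "real set \<Rightarrow> ereal" where
  "assouad_dim F = Inf {ereal s | s. s \<ge> 0 \<and> (\<exists>C>0. \<forall>x r R. x \<in> F \<longrightarrow> 0 < r \<longrightarrow> r < R \<longrightarrow>
        real (cover_num (ball x R \<inter> F) r) \<le> C * (R / r) powr s)}"

definition modified_assouad_dim :: "real set \<Rightarrow> ereal" where
  "modified_assouad_dim F = Inf {(SUP i. assouad_dim (Fs i)) | Fs :: nat \<Rightarrow> real set. F \<subseteq> (\<Union>i. Fs i)}"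

end

theory Submission
  imports Defs
begin

text \<open>
  Fix \<open>\<delta> > 0\<close>. Super sparseness near \<open>a\<close> gives an \<open>N\<^sub>0\<close> such that every window of
  \<open>N \<ge> N\<^sub>0\<close> consecutive dyadic scales contains at most \<open>\<delta>N\<close> scales at which \<open>l\<close> meets the
  annulus around \<open>a\<close>; the points with a given \<open>N\<^sub>0\<close> form sets covering \<open>l\<close>. Seen from a
  point of an \<open>r\<close>-separated subset of such a set inside a ball of radius \<open>R\<close>, the other
  points occupy only scales between \<open>R\<close> and \<open>r\<close>, hence at most \<open>\<delta> log\<^sub>2(R/r) + O(N\<^sub>0)\<close>
  of them. A finite set of diameter at most 1 in which every point sees at most \<open>b\<close> scales
  has at most \<open>5\<^sup>b\<close> points: cut it into five pieces of a fifth of its diameter; inside a piece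
  every point loses the scale of a far endpoint. So the separated set has
  \<open>O((R/r)\<^bsup>\<delta> log\<^sub>2 5\<^esup>)\<close> points, each piece has Assouad dimension at most \<open>\<delta> log\<^sub>2 5\<close>, and
  \<open>\<delta> \<rightarrow> 0\<close>. The example is countable, hence of modified Assouad dimension 0, yet it
  meets every annulus around 0.
\<close>

lemma mem_W_at_iff:
  "k \<in> W_at S w \<longleftrightarrow> (\<exists>u\<in>S. (1/2)^(k+1) \<le> \<bar>u - w\<bar> \<and> \<bar>u - w\<bar> \<le> (1/2::real)^k)"
proof -
  have "t \<in> {(1/2)^(k+1) .. (1/2)^k} \<union> {-((1/2)^k) .. -((1/2)^(k+1))}
          \<longleftrightarrow> (1/2)^(k+1) \<le> \<bar>t\<bar> \<and> \<bar>t\<bar> \<le> (1/2::real)^k" for t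
    by (cases "t \<ge> 0") auto
  then show ?thesis unfolding W_at_def W_def by blast
qed

lemma W_at_mono: "S \<subseteq> T \<Longrightarrow> W_at S w \<subseteq> W_at T w"
  unfolding subset_iff mem_W_at_iff by blast

lemma finite_dyadic_scales_above:
  assumes "d > 0" shows "finite {k::nat. d \<le> (1/2::real)^k}"
proof -
  obtain K where K: "(1/2::real)^K < d" using real_arch_pow_inv[OF assms, of "1/2"] by auto
  have "(1/2::real)^k < d" if "K \<le> k" for k
  proof -
    have "(1/2::real)^k \<le> (1/2)^K" by (rule power_decreasing[OF that]) auto
    with K show ?thesis by linarith
  qed
  then have "{k. d \<le> (1/2::real)^k} \<subseteq> {..<K}" by (metis lessThan_iff mem_Collect_eq not_le subsetI)
  then show ?thesis using finite_subset by blast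
qed

lemma finite_W_at:
  assumes "finite S" shows "finite (W_at S w)"
proof -
  have "W_at S w \<subseteq> (\<Union>u\<in>S - {w}. {k. \<bar>u - w\<bar> \<le> (1/2::real)^k})"
  proof
    fix k assume "k \<in> W_at S w"
    then obtain u where "u \<in> S" "(1/2)^(k+1) \<le> \<bar>u - w\<bar>" "\<bar>u - w\<bar> \<le> (1/2::real)^k"
      by (auto simp: mem_W_at_iff)
    moreover have "0 < (1/2::real)^(k+1)" by simp
    ultimately have "u \<in> S - {w}" by (metis DiffI abs_zero diff_self not_le singletonD)
    with \<open>\<bar>u - w\<bar> \<le> _\<close> show "k \<in> (\<Union>u\<in>S - {w}. {k. \<bar>u - w\<bar> \<le> (1/2::real)^k})" by blast
  qed
  moreover have "finite (\<Union>u\<in>S - {w}. {k. \<bar>u - w\<bar> \<le> (1/2::real)^k})"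
    using assms by (intro finite_UN_I) (auto intro: finite_dyadic_scales_above)
  ultimately show ?thesis using finite_subset by blast
qed

lemma dyadic_scale_exists:
  assumes "0 < d" "d \<le> (1::real)"
  obtains k :: nat where "(1/2)^(k+1) \<le> d" "d \<le> (1/2)^k"
proof -
  obtain K where K: "(1/2::real)^K < d" using real_arch_pow_inv[OF assms(1), of "1/2"] by auto
  have "(1/2::real)^Suc K \<le> (1/2)^K" by (rule power_decreasing) auto
  with K have ex: "\<exists>k. (1/2::real)^Suc k \<le> d" by (intro exI[of _ K]) linarith
  define k where "k = (LEAST k. (1/2::real)^Suc k \<le> d)"
  have "(1/2::real)^Suc k \<le> d" unfolding k_def by (rule LeastI_ex[OF ex])
  moreover have "d \<le> (1/2)^k"
  proof (cases k)
    case (Suc j)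
    then have "\<not> (1/2::real)^Suc j \<le> d" using Least_le[of _ j] unfolding k_def by fastforce
    then show ?thesis using Suc by simp
  qed (use assms in simp)
  ultimately show ?thesis using that by simp
qed

lemma W_at_psubset:
  assumes "u \<in> S" "\<bar>u - w\<bar> \<le> 1" "T \<subseteq> S" "w \<in> T"
    and near: "\<And>v. v \<in> T \<Longrightarrow> \<bar>v - w\<bar> < \<bar>u - w\<bar> / 2"
  shows "W_at T w \<subset> W_at S w"
proof -
  have "0 < \<bar>u - w\<bar>" using near[OF \<open>w \<in> T\<close>] by simp
  then obtain k where k: "(1/2)^(k+1) \<le> \<bar>u - w\<bar>" "\<bar>u - w\<bar> \<le> (1/2::real)^k"
    using dyadic_scale_exists assms(2) by blast
  have "k \<in> W_at S w" using k assms(1) by (auto simp: mem_W_at_iff)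
  moreover have "k \<notin> W_at T w"
    using k near by (force simp: mem_W_at_iff)
  ultimately show ?thesis using W_at_mono[OF assms(3)] by blast
qed

lemma five_pieces_losing_a_scale:
  assumes "finite S" "card S \<ge> 2" "\<forall>u\<in>S. \<forall>w\<in>S. \<bar>u - w\<bar> \<le> 1"
  obtains Q :: "nat \<Rightarrow> real set"
  where "S \<subseteq> (\<Union>i<5. Q i)" "\<And>i. Q i \<subseteq> S" "\<And>i w. w \<in> Q i \<Longrightarrow> W_at (Q i) w \<subset> W_at S w"
proof -
  define a where "a = Min S"
  define D where "D = Max S - a"
  have "S \<noteq> {}" using assms(2) by auto
  then have aS: "a \<in> S" and cS: "a + D \<in> S" and bnd: "\<And>x. x \<in> S \<Longrightarrow> a \<le> x \<and> x \<le> a + D"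
    using assms(1) by (simp_all add: a_def D_def)
  have "D > 0"
  proof (rule ccontr)
    assume "\<not> D > 0"
    then have "S \<subseteq> {a}" using bnd by force
    then show False using assms card_mono[of "{a}" S] by simp
  qed
  define Q where "Q i = S \<inter> {a + real i * D / 5 .. a + real i * D / 5 + D / 5}" for i :: nat
  have "S \<subseteq> (\<Union>i<5. Q i)"
  proof
    fix x assume x: "x \<in> S"
    then have "x \<in> Q 0 \<or> x \<in> Q 1 \<or> x \<in> Q 2 \<or> x \<in> Q 3 \<or> x \<in> Q 4"
      using bnd[OF x] by (simp add: Q_def) linarith
    then show "x \<in> (\<Union>i<5. Q i)" by (auto simp: lessThan_nat_numeral)
  qed
  moreover have "W_at (Q i) w \<subset> W_at S w" if w: "w \<in> Q i" for i w
  proof -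
    have "w \<in> S" using w by (simp add: Q_def)
    have "\<exists>e\<in>S. D / 2 \<le> \<bar>e - w\<bar>"
    proof (cases "w - a \<ge> D / 2")
      case True
      then show ?thesis using aS by (intro bexI[of _ a]) (auto simp: abs_if)
    next
      case False
      then show ?thesis using cS bnd[OF \<open>w \<in> S\<close>] by (intro bexI[of _ "a + D"]) auto
    qed
    then obtain e where e: "e \<in> S" "D / 2 \<le> \<bar>e - w\<bar>" by blast
    have near: "\<bar>v - w\<bar> < \<bar>e - w\<bar> / 2" if "v \<in> Q i" for v
    proof -
      have "\<bar>v - w\<bar> \<le> D / 5" using that w unfolding Q_def abs_le_iff by auto
      moreover have "D / 5 < D / 4" using \<open>D > 0\<close> by simp
      ultimately show ?thesis using e(2) by argo
    qed
    have "\<bar>e - w\<bar> \<le> 1" using assms(3) e(1) \<open>w \<in> S\<close> by blast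
    moreover have "Q i \<subseteq> S" by (simp add: Q_def)
    ultimately show ?thesis using W_at_psubset[OF e(1)] w near by blast
  qed
  ultimately show ?thesis using that[of Q] by (auto simp: Q_def)
qed

lemma card_le_five_pow_if_card_W_at_le:
  assumes "finite S" "\<forall>u\<in>S. \<forall>w\<in>S. \<bar>u - w\<bar> \<le> 1" "\<forall>w\<in>S. card (W_at S w) \<le> b"
  shows "card S \<le> 5^b"
  using assms
proof (induction b arbitrary: S)
  case 0
  show ?case
  proof (rule ccontr)
    assume "\<not> card S \<le> 5^0"
    then obtain u w where uw: "u \<in> S" "w \<in> S" "u \<noteq> w"
      using card_le_Suc0_iff_eq[OF "0.prems"(1)] by auto
    have "W_at {w} w \<subset> W_at S w"
      using uw "0.prems"(2) by (intro W_at_psubset[of u]) auto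
    then have "card (W_at S w) > 0" using finite_W_at[OF "0.prems"(1)] card_gt_0_iff by blast
    with "0.prems"(3) uw show False by auto
  qed
next
  case (Suc b)
  show ?case
  proof (cases "card S \<ge> 2")
    case True
    obtain Q :: "nat \<Rightarrow> real set" where cover: "S \<subseteq> (\<Union>i<5. Q i)" and sub: "\<And>i. Q i \<subseteq> S"
      and lose: "\<And>i w. w \<in> Q i \<Longrightarrow> W_at (Q i) w \<subset> W_at S w"
      using five_pieces_losing_a_scale[OF Suc.prems(1) True Suc.prems(2)] by blast
    have finQ: "finite (Q i)" for i using Suc.prems(1) sub by (rule finite_subset[rotated])
    have "card (Q i) \<le> 5^b" for i
    proof (rule Suc.IH[OF finQ])
      show "\<forall>u\<in>Q i. \<forall>w\<in>Q i. \<bar>u - w\<bar> \<le> 1" using Suc.prems(2) sub by blast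
      show "\<forall>w\<in>Q i. card (W_at (Q i) w) \<le> b"
      proof
        fix w assume w: "w \<in> Q i"
        then have "card (W_at (Q i) w) < card (W_at S w)"
          by (rule psubset_card_mono[OF finite_W_at[OF Suc.prems(1)] lose])
        moreover have "w \<in> S" using sub w by blast
        then have "card (W_at S w) \<le> Suc b" using Suc.prems(3) by blast
        ultimately show "card (W_at (Q i) w) \<le> b" by linarith
      qed
    qed
    have "card S \<le> card (\<Union>i<5. Q i)"
      using finQ by (intro card_mono[OF _ cover]) simp
    also have "\<dots> \<le> (\<Sum>i<5. card (Q i))" by (rule card_UN_le) simp
    also have "\<dots> \<le> 5^Suc b"
      using sum_mono[of "{..<5}" "\<lambda>i. card (Q i)" "\<lambda>_. 5^b"] \<open>\<And>i. card (Q i) \<le> 5^b\<close> by simp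
    finally show ?thesis .
  next
    case False
    then show ?thesis using one_le_power[of "5::nat" "Suc b"] by linarith
  qed
qed

definition window_sparse :: "real \<Rightarrow> nat \<Rightarrow> nat set \<Rightarrow> bool" where
  "window_sparse \<delta> N0 K \<longleftrightarrow> (\<forall>k M. N0 \<le> M \<longrightarrow> real (card (K \<inter> {k+1..k+M})) \<le> \<delta> * real M)"

lemma card_window_le:
  assumes "window_sparse \<delta> N0 K" "0 \<le> \<delta>"
  shows "real (card (K \<inter> {k..k+L})) \<le> 1 + \<delta> * real L + real N0"
proof -
  have "card (K \<inter> {k..k+L}) \<le> card (insert k (K \<inter> {k+1..k+L}))"
    by (intro card_mono) auto
  also have "\<dots> \<le> Suc (card (K \<inter> {k+1..k+L}))" by (rule card_insert_le_m1) auto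
  finally have "real (card (K \<inter> {k..k+L})) \<le> 1 + real (card (K \<inter> {k+1..k+L}))" by simp
  moreover have "real (card (K \<inter> {k+1..k+L})) \<le> \<delta> * real L + real N0"
  proof (cases "N0 \<le> L")
    case True
    then have "real (card (K \<inter> {k+1..k+L})) \<le> \<delta> * real L"
      using assms(1) unfolding window_sparse_def by blast
    then show ?thesis by simp
  next
    case False
    have "card (K \<inter> {k+1..k+L}) \<le> card {k+1..k+L}" by (intro card_mono) auto
    then have "card (K \<inter> {k+1..k+L}) \<le> L" by simp
    moreover have "0 \<le> \<delta> * real L" using assms(2) by simp
    ultimately show ?thesis using False by linarith
  qed
  ultimately show ?thesis by linarith
qed

lemma super_sparse_near_imp_window_sparse:
  assumes "super_sparse_near l a" "\<delta> > 0"
  obtains N0 where "window_sparse \<delta> N0 (W_at l a)"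
proof -
  let ?d = "\<lambda>N k. real (card (W_at l a \<inter> {k+1..k+N})) / real N"
  have "limsup (\<lambda>N. SUP k. ereal (?d N k)) < ereal \<delta>"
    using assms unfolding super_sparse_near_def by simp
  then have "eventually (\<lambda>N. (SUP k. ereal (?d N k)) < ereal \<delta>) sequentially"
    by (rule Limsup_lessD)
  then obtain N0 where N0: "\<And>N. N0 \<le> N \<Longrightarrow> (SUP k. ereal (?d N k)) < ereal \<delta>"
    unfolding eventually_sequentially by blast
  have "real (card (W_at l a \<inter> {k+1..k+N})) \<le> \<delta> * real N" if "N0 \<le> N" for k N
  proof (cases "N = 0")
    case False
    have "ereal (?d N k) \<le> (SUP k. ereal (?d N k))" by (rule SUP_upper) simp
    then have "ereal (?d N k) < ereal \<delta>" using N0[OF that] by (rule le_less_trans)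
    with False show ?thesis by (simp add: divide_less_eq)
  qed simp
  then show ?thesis using that unfolding window_sparse_def by blast
qed

lemma dyadic_scales_between_subset_interval:
  assumes "0 < r" "r < R"
  obtains k0 L :: nat where "{k. (1/2)^(k+1) < 2*R \<and> r \<le> (1/2::real)^k} \<subseteq> {k0..k0+L}" "2^L < 4*R/r"
proof (cases "{k. (1/2)^(k+1) < 2*R \<and> r \<le> (1/2::real)^k} = {}")
  case True
  have "(2::real)^0 < 4*R/r" using assms by simp
  then show ?thesis using that[of 0 0] True by blast
next
  case False
  define A where "A = {k. (1/2)^(k+1) < 2*R \<and> r \<le> (1/2::real)^k}"
  have "finite A" unfolding A_def
    using finite_dyadic_scales_above[OF assms(1)] by (rule rev_finite_subset) auto
  define k0 where "k0 = Min A"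
  define L where "L = Max A - Min A"
  have "A \<noteq> {}" using False by (simp add: A_def)
  have k0A: "k0 \<in> A" and k1A: "k0 + L \<in> A" and "A \<subseteq> {k0..k0+L}"
    using \<open>finite A\<close> \<open>A \<noteq> {}\<close> by (auto simp: k0_def L_def)
  have "r \<le> (1/2)^k0 * (1/2)^L" using k1A by (simp add: A_def power_add)
  then have "r * 2^L \<le> (1/2::real)^k0" by (simp add: power_one_over field_simps)
  also have "\<dots> < 4*R" using k0A by (simp add: A_def)
  finally have "2^L < 4*R/r" using assms by (simp add: field_simps)
  then show ?thesis using that \<open>A \<subseteq> _\<close> unfolding A_def by blast
qed

lemma W_at_separated_subset:
  assumes "w \<in> S" "\<forall>u\<in>S. \<forall>v\<in>S. u \<noteq> v \<longrightarrow> r \<le> \<bar>u - v\<bar>" "\<forall>u\<in>S. \<forall>v\<in>S. \<bar>u - v\<bar> < 2*R"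
  shows "W_at S w \<subseteq> {k. (1/2)^(k+1) < 2*R \<and> r \<le> (1/2::real)^k}"
proof
  fix k assume "k \<in> W_at S w"
  then obtain u where u: "u \<in> S" "(1/2)^(k+1) \<le> \<bar>u - w\<bar>" "\<bar>u - w\<bar> \<le> (1/2::real)^k"
    by (auto simp: mem_W_at_iff)
  have "0 < (1/2::real)^(k+1)" by simp
  then have "u \<noteq> w" using u(2) by (metis abs_zero diff_self not_le)
  then show "k \<in> {k. (1/2)^(k+1) < 2*R \<and> r \<le> (1/2::real)^k}"
    using assms u by fastforce
qed

definition sparse_points :: "real set \<Rightarrow> real \<Rightarrow> nat \<Rightarrow> real set" where
  "sparse_points l \<delta> N0 = {a \<in> l. window_sparse \<delta> N0 (W_at l a)}"

lemma card_separated_sparse_points_le: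
  assumes "l \<subseteq> {0..1}" "\<delta> > 0" "finite S" "S \<subseteq> sparse_points l \<delta> N0"
    and sep: "\<forall>u\<in>S. \<forall>v\<in>S. u \<noteq> v \<longrightarrow> r \<le> \<bar>u - v\<bar>"
    and diam: "\<forall>u\<in>S. \<forall>v\<in>S. \<bar>u - v\<bar> < 2*R" and "0 < r" "r < R"
  shows "real (card S) \<le> 5^(N0+1) * (4*R/r) powr (\<delta> * log 2 5)"
proof -
  obtain k0 L where scales: "{k. (1/2)^(k+1) < 2*R \<and> r \<le> (1/2::real)^k} \<subseteq> {k0..k0+L}"
    and L: "2^L < 4*R/r"
    using dyadic_scales_between_subset_interval[OF \<open>0 < r\<close> \<open>r < R\<close>] by blast
  define B where "B = 1 + \<delta> * real L + real N0"
  have "real (card (W_at S w)) \<le> B" if "w \<in> S" for w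
  proof -
    have "W_at S w \<subseteq> W_at l w \<inter> {k0..k0+L}"
      using W_at_mono[of S l] W_at_separated_subset[OF that sep diam] scales assms(4)
      by (auto simp: sparse_points_def)
    then have "card (W_at S w) \<le> card (W_at l w \<inter> {k0..k0+L})" by (intro card_mono) auto
    moreover have "window_sparse \<delta> N0 (W_at l w)" using that assms(4) by (auto simp: sparse_points_def)
    ultimately show ?thesis
      unfolding B_def using card_window_le[of \<delta> N0 "W_at l w" k0 L] \<open>\<delta> > 0\<close> by simp
  qed
  moreover have "\<forall>u\<in>S. \<forall>v\<in>S. \<bar>u - v\<bar> \<le> 1"
  proof (intro ballI)
    fix u v assume "u \<in> S" "v \<in> S"
    then have "u \<in> {0..1}" "v \<in> {0..1}" using assms(1,4) by (auto simp: sparse_points_def)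
    then show "\<bar>u - v\<bar> \<le> 1" by (simp add: abs_le_iff)
  qed
  ultimately have "card S \<le> 5^nat \<lfloor>B\<rfloor>"
    by (intro card_le_five_pow_if_card_W_at_le \<open>finite S\<close>) (auto simp: le_nat_floor)
  then have "real (card S) \<le> 5 powr real (nat \<lfloor>B\<rfloor>)" by (simp add: powr_realpow)
  also have "\<dots> \<le> 5 powr B" using \<open>\<delta> > 0\<close> by (intro powr_mono) (auto simp: B_def)
  also have "\<dots> = 5^(N0+1) * 5 powr (\<delta> * real L)"
    by (simp add: B_def powr_add powr_realpow[symmetric] algebra_simps)
  also have "5 powr (\<delta> * real L) = (2 powr log 2 5) powr (\<delta> * real L)" by simp
  also have "\<dots> = (2^L) powr (\<delta> * log 2 5)"
    by (simp add: powr_realpow[symmetric] powr_powr mult_ac del: powr_log_cancel)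
  also have "\<dots> \<le> (4*R/r) powr (\<delta> * log 2 5)"
    using L \<open>\<delta> > 0\<close> by (intro powr_mono2) auto
  finally show ?thesis by simp
qed

lemma cover_num_le:
  assumes "finite C" "E \<subseteq> (\<Union>c\<in>C. {c..c+r})"
  shows "cover_num E r \<le> card C"
  unfolding cover_num_def by (rule Least_le) (use assms in blast)

lemma cover_num_le_if_card_separated_le:
  assumes "0 < r"
    and card_sep: "\<And>S. finite S \<Longrightarrow> S \<subseteq> E \<Longrightarrow> \<forall>u\<in>S. \<forall>v\<in>S. u \<noteq> v \<longrightarrow> r \<le> \<bar>u - v\<bar>
                    \<Longrightarrow> real (card S) \<le> B"
  shows "real (cover_num E r) \<le> 2 * B"
proof -
  \<comment> \<open>A maximal \<open>r\<close>-separated subset is an \<open>r\<close>-net; each net point needs two intervals.\<close>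
  define sep where "sep S \<longleftrightarrow> finite S \<and> S \<subseteq> E \<and> (\<forall>u\<in>S. \<forall>v\<in>S. u \<noteq> v \<longrightarrow> r \<le> \<bar>u - v\<bar>)" for S
  have "card S < nat \<lfloor>B\<rfloor> + 1" if "sep S" for S
    using le_nat_floor[OF card_sep] that unfolding sep_def by (simp add: less_Suc_eq_le)
  moreover have "sep {}" by (simp add: sep_def)
  ultimately obtain S where "sep S" and maximal: "\<And>S'. sep S' \<Longrightarrow> card S' \<le> card S"
    using ex_has_greatest_nat[of sep "{}" card] by metis
  have "E \<subseteq> (\<Union>c\<in>(\<lambda>p. p - r) ` S \<union> S. {c..c+r})"
  proof
    fix e assume "e \<in> E"
    have "\<exists>p\<in>S. \<bar>e - p\<bar> < r"
    proof (rule ccontr)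
      assume far: "\<not> (\<exists>p\<in>S. \<bar>e - p\<bar> < r)"
      then have "e \<notin> S" using \<open>0 < r\<close> by force
      moreover have "sep (insert e S)"
        using \<open>sep S\<close> \<open>e \<in> E\<close> far by (auto simp: sep_def abs_minus_commute not_less)
      ultimately have "card (insert e S) \<le> card S" using maximal by blast
      with \<open>e \<notin> S\<close> \<open>sep S\<close> show False by (simp add: sep_def)
    qed
    then obtain p where "p \<in> S" "\<bar>e - p\<bar> < r" by blast
    then have "e \<in> {p - r .. p - r + r} \<or> e \<in> {p .. p + r}" by (auto simp: abs_less_iff)
    with \<open>p \<in> S\<close> show "e \<in> (\<Union>c\<in>(\<lambda>p. p - r) ` S \<union> S. {c..c+r})" by blast
  qed
  then have "cover_num E r \<le> card ((\<lambda>p. p - r) ` S \<union> S)"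
    using \<open>sep S\<close> by (intro cover_num_le) (auto simp: sep_def)
  also have "\<dots> \<le> card S + card S"
    by (rule order_trans[OF card_Un_le add_right_mono[OF card_image_le]]) (use \<open>sep S\<close> sep_def in blast)
  finally show ?thesis using card_sep \<open>sep S\<close> unfolding sep_def by force
qed

lemma assouad_dim_le:
  assumes "0 \<le> s" "0 < C"
    and "\<And>x r R. x \<in> F \<Longrightarrow> 0 < r \<Longrightarrow> r < R \<Longrightarrow> real (cover_num (ball x R \<inter> F) r) \<le> C * (R/r) powr s"
  shows "assouad_dim F \<le> ereal s"
  unfolding assouad_dim_def by (rule Inf_lower) (use assms in blast)

lemma assouad_dim_nonneg: "0 \<le> assouad_dim F"
  unfolding assouad_dim_def by (rule Inf_greatest) auto

lemma assouad_dim_singleton: "assouad_dim {p} = 0"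
proof (rule antisym)
  have "assouad_dim {p} \<le> ereal 0"
  proof (rule assouad_dim_le)
    fix x r R :: real assume "0 < r" "r < R"
    then have "cover_num (ball x R \<inter> {p}) r \<le> card {p}" by (intro cover_num_le) auto
    with \<open>0 < r\<close> \<open>r < R\<close> show "real (cover_num (ball x R \<inter> {p}) r) \<le> 1 * (R/r) powr 0" by simp
  qed auto
  then show "assouad_dim {p} \<le> 0" by (simp add: zero_ereal_def)
qed (rule assouad_dim_nonneg)

lemma modified_assouad_dim_le:
  fixes Fs :: "nat \<Rightarrow> real set"
  assumes "F \<subseteq> (\<Union>i. Fs i)" "\<And>i. assouad_dim (Fs i) \<le> c"
  shows "modified_assouad_dim F \<le> c"
proof -
  have "modified_assouad_dim F \<le> (SUP i. assouad_dim (Fs i))"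
    unfolding modified_assouad_dim_def by (rule Inf_lower) (use assms(1) in auto)
  also have "\<dots> \<le> c" by (rule SUP_least) (rule assms(2))
  finally show ?thesis .
qed

lemma modified_assouad_dim_nonneg: "0 \<le> modified_assouad_dim F"
  unfolding modified_assouad_dim_def
proof (rule Inf_greatest, clarify)
  fix Fs :: "nat \<Rightarrow> real set"
  have "0 \<le> assouad_dim (Fs 0)" by (rule assouad_dim_nonneg)
  also have "\<dots> \<le> (SUP i. assouad_dim (Fs i))" by (rule SUP_upper) simp
  finally show "0 \<le> (SUP i. assouad_dim (Fs i))" .
qed

lemma modified_assouad_dim_countable:
  assumes "countable F" shows "modified_assouad_dim F = 0"
proof (rule antisym)
  have "F \<subseteq> (\<Union>i. {from_nat_into F i})" using subset_range_from_nat_into[OF assms] by blast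
  then show "modified_assouad_dim F \<le> 0"
    by (rule modified_assouad_dim_le) (simp add: assouad_dim_singleton)
qed (rule modified_assouad_dim_nonneg)

lemma assouad_dim_sparse_points_le:
  assumes "l \<subseteq> {0..1}" "\<delta> > 0"
  shows "assouad_dim (sparse_points l \<delta> N0) \<le> ereal (\<delta> * log 2 5)"
proof (rule assouad_dim_le)
  let ?s = "\<delta> * log 2 5"
  show "0 \<le> ?s" using assms(2) by simp
  show "0 < 2 * 5^(N0+1) * 4 powr ?s" by simp
  fix x r R :: real assume "x \<in> sparse_points l \<delta> N0" "0 < r" "r < R"
  have "real (cover_num (ball x R \<inter> sparse_points l \<delta> N0) r) \<le> 2 * (5^(N0+1) * (4*R/r) powr ?s)"
  proof (rule cover_num_le_if_card_separated_le[OF \<open>0 < r\<close>])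
    fix S assume S: "finite S" "S \<subseteq> ball x R \<inter> sparse_points l \<delta> N0"
      "\<forall>u\<in>S. \<forall>v\<in>S. u \<noteq> v \<longrightarrow> r \<le> \<bar>u - v\<bar>"
    have "\<forall>u\<in>S. \<forall>v\<in>S. \<bar>u - v\<bar> < 2*R"
    proof (intro ballI)
      fix u v assume "u \<in> S" "v \<in> S"
      then have "dist x u < R" "dist x v < R" using S(2) by auto
      then show "\<bar>u - v\<bar> < 2*R" by (simp add: dist_real_def abs_less_iff)
    qed
    then show "real (card S) \<le> 5^(N0+1) * (4*R/r) powr ?s"
      using S \<open>0 < r\<close> \<open>r < R\<close> by (intro card_separated_sparse_points_le[OF assms]) auto
  qed
  also have "\<dots> = 2 * 5^(N0+1) * 4 powr ?s * (R/r) powr ?s"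
    using powr_mult[of 4 "R/r" ?s] \<open>0 < r\<close> \<open>r < R\<close> by simp
  finally show "real (cover_num (ball x R \<inter> sparse_points l \<delta> N0) r) \<le> 2 * 5^(N0+1) * 4 powr ?s * (R/r) powr ?s" .
qed

lemma modified_assouad_dim_eq_0_if_super_sparse:
  assumes "l \<subseteq> {0..1}" "\<forall>a\<in>l. super_sparse_near l a"
  shows "modified_assouad_dim l = 0"
proof (rule antisym)
  show "modified_assouad_dim l \<le> 0"
  proof (rule ereal_le_epsilon2)
    fix \<epsilon> :: real assume "0 < \<epsilon>"
    define \<delta> where "\<delta> = \<epsilon> / log 2 5"
    have "\<delta> > 0" using \<open>0 < \<epsilon>\<close> by (simp add: \<delta>_def)
    have "l \<subseteq> (\<Union>N0. sparse_points l \<delta> N0)"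
    proof
      fix a assume "a \<in> l"
      then obtain N0 where "window_sparse \<delta> N0 (W_at l a)"
        using super_sparse_near_imp_window_sparse assms(2) \<open>\<delta> > 0\<close> by blast
      with \<open>a \<in> l\<close> show "a \<in> (\<Union>N0. sparse_points l \<delta> N0)" by (auto simp: sparse_points_def)
    qed
    then have "modified_assouad_dim l \<le> ereal (\<delta> * log 2 5)"
      by (rule modified_assouad_dim_le) (rule assouad_dim_sparse_points_le[OF assms(1) \<open>\<delta> > 0\<close>])
    moreover have "log 2 5 > (0::real)" by simp
    ultimately show "modified_assouad_dim l \<le> 0 + ereal \<epsilon>" by (simp add: \<delta>_def)
  qed
qed (rule modified_assouad_dim_nonneg)

lemma not_sparse_near_dyadic_sequence:
  "\<not> sparse_near (insert 0 {(1/2::real)^k | k. k \<ge> 1}) 0"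
proof -
  let ?E = "insert 0 {(1/2::real)^k | k. k \<ge> 1}"
  have "{1..} \<subseteq> W_at ?E 0"
    by (force simp: mem_W_at_iff)
  then have "W_at ?E 0 \<inter> {1..N} = {1..N}" for N by auto
  then have "eventually (\<lambda>N. ereal (real (card (W_at ?E 0 \<inter> {1..N})) / real N) = 1) sequentially"
    by (intro eventually_sequentiallyI[of 1]) simp
  then have "limsup (\<lambda>N. ereal (real (card (W_at ?E 0 \<inter> {1..N})) / real N)) = 1"
    by (intro lim_imp_Limsup tendsto_eventually) auto
  then show ?thesis unfolding sparse_near_def by simp
qed

theorem proposition4p4:
  shows "(\<forall>l::real set. compact l \<and> l \<subseteq> {0..1} \<and> (\<forall>a\<in>l. super_sparse_near l a)
            \<longrightarrow> modified_assouad_dim l = 0)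
    \<and> (let E = insert 0 {(1/2::real)^k | k. k \<ge> 1} in
         modified_assouad_dim E = 0 \<and> \<not> sparse_near E 0)"
proof -
  have "countable {(1/2::real)^k | k. k \<ge> 1}"
    by (rule countable_subset[of _ "range (\<lambda>k::nat. (1/2::real)^k)"]) auto
  then have "modified_assouad_dim (insert 0 {(1/2::real)^k | k. k \<ge> 1}) = 0"
    by (intro modified_assouad_dim_countable) simp
  then show ?thesis
    using modified_assouad_dim_eq_0_if_super_sparse not_sparse_near_dyadic_sequence by (simp add: Let_def)
qed

end
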